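(* Let $X$ be a locally path connected and semilocally simply connected space. Then the CO' topology and the UC topology on $\Pi_1(X)$ coincide.
   Context: For a space $X$, $\mathcal P X=C([0,1],X)$ is the set of paths, with the compact-open topology. For paths $\gamma,\eta$ with $\gamma(0)=\eta(1)$, $\gamma\,\Box\,\eta$ denotes the concatenated path which first traverses $\eta$ and then $\gamma$; $[\gamma]$ denotes the endpoint-fixing path-homotopy class of $\gamma$, and $\Pi_1(X)$ is the set of all such classes (the fundamental groupoid). A subset $V\subseteq X$ is relatively inessential if for $x\in V$ the homomorphism $\pi_1(V,x)\to\pi_1(X,x)$ induced by inclusion is trivial; $X$ is semilocally simply connected if every point has a relatively inessential neighbourhood. The CO' topology on $\Pi_1(X)$ is the quotient topology induced from the compact-open topology on $\mathcal P X$ by $q\colon\gamma\mapsto[\gamma]$. For $[\gamma]\in\Pi_1(X)$ and open sets $U\ni\gamma(1)$, $V\ni\gamma(0)$, let $N([\gamma],U,V)=\{[\delta\,\Box\,\gamma\,\Box\,\theta] : \delta\text{ a path in }U\text{ with }\delta(0)=\gamma(1),\ \theta\text{ a path in }V\text{ with }\theta(1)=\gamma(0)\}$. The UC topology on $\Pi_1(X)$ is the topology generated by the sets $N([\gamma],U,V)$ with $U,V$ path connected relatively inessential open neighbourhoods of $\gamma(1)$, $\gamma(0)$. *)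

theory Defs
  imports "HOL-Analysis.Analysis"
begin

text \<open>Concatenation: \<open>pcomp \<gamma> \<eta>\<close> is \<gamma> \<box> \<eta>, which first traverses \<eta> and then \<gamma>.\<close>
definition pcomp :: "(real \<Rightarrow> 'a) \<Rightarrow> (real \<Rightarrow> 'a) \<Rightarrow> real \<Rightarrow> 'a" where
  "pcomp \<gamma> \<eta> = (\<lambda>t. if t \<le> 1/2 then \<eta> (2 * t) else \<gamma> (2 * t - 1))"

definition paths :: "'a topology \<Rightarrow> (real \<Rightarrow> 'a) set" where
  "paths X = {g. pathin X g}"

definition path_homotopic :: "'a topology \<Rightarrow> (real \<Rightarrow> 'a) \<Rightarrow> (real \<Rightarrow> 'a) \<Rightarrow> bool" where
  "path_homotopic X p q \<longleftrightarrow>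
     homotopic_with (\<lambda>r. r 0 = p 0 \<and> r 1 = p 1) (top_of_set {0..1}) X p q"

definition pclass :: "'a topology \<Rightarrow> (real \<Rightarrow> 'a) \<Rightarrow> (real \<Rightarrow> 'a) set" where
  "pclass X g = {h. pathin X h \<and> path_homotopic X g h}"

definition Pi1 :: "'a topology \<Rightarrow> (real \<Rightarrow> 'a) set set" where
  "Pi1 X = pclass X ` paths X"

definition rel_inessential :: "'a topology \<Rightarrow> 'a set \<Rightarrow> bool" where
  "rel_inessential X V \<longleftrightarrow>
     (\<forall>x\<in>V. \<forall>l. pathin (subtopology X V) l \<and> l 0 = x \<and> l 1 = x
              \<longrightarrow> path_homotopic X l (\<lambda>t. x))"

definition semilocally_simply_connected :: "'a topology \<Rightarrow> bool" where
  "semilocally_simply_connected X \<longleftrightarrow>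
     (\<forall>x\<in>topspace X. \<exists>U V. openin X U \<and> x \<in> U \<and> U \<subseteq> V \<and> V \<subseteq> topspace X
                          \<and> rel_inessential X V)"

definition CO_topology :: "'a topology \<Rightarrow> (real \<Rightarrow> 'a) topology" where
  "CO_topology X = topology_generated_by
     (insert (paths X)
       {{f \<in> paths X. f ` K \<subseteq> U} | K U. compact K \<and> K \<subseteq> {0..1} \<and> openin X U})"

definition quotient_topology :: "'b topology \<Rightarrow> ('b \<Rightarrow> 'c) \<Rightarrow> 'c set \<Rightarrow> 'c topology" where
  "quotient_topology T f Y =
     topology (\<lambda>S. S \<subseteq> Y \<and> openin T {x \<in> topspace T. f x \<in> S})"

lemma istopology_quotient:
  "istopology (\<lambda>S. S \<subseteq> Y \<and> openin T {x \<in> topspace T. f x \<in> S})"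
proof -
  have int: "{x \<in> topspace T. f x \<in> S \<inter> S'} =
             {x \<in> topspace T. f x \<in> S} \<inter> {x \<in> topspace T. f x \<in> S'}" for S S'
    by auto
  have un: "{x \<in> topspace T. f x \<in> \<Union>K} = (\<Union>S\<in>K. {x \<in> topspace T. f x \<in> S})" for K
    by auto
  have "openin T {x \<in> topspace T. f x \<in> S \<inter> S'}"
    if "openin T {x \<in> topspace T. f x \<in> S}" "openin T {x \<in> topspace T. f x \<in> S'}" for S S'
    unfolding int using that by (rule openin_Int)
  moreover have "openin T {x \<in> topspace T. f x \<in> \<Union>K}"
    if "\<forall>S\<in>K. openin T {x \<in> topspace T. f x \<in> S}" for K
    unfolding un using that by (intro openin_Union) auto
  ultimately show ?thesis
    unfolding istopology_def by blast
qed

definition COq_topology :: "'a topology \<Rightarrow> (real \<Rightarrow> 'a) set topology" where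
  "COq_topology X = quotient_topology (CO_topology X) (pclass X) (Pi1 X)"

definition Nset :: "'a topology \<Rightarrow> (real \<Rightarrow> 'a) \<Rightarrow> 'a set \<Rightarrow> 'a set \<Rightarrow> (real \<Rightarrow> 'a) set set" where
  "Nset X \<gamma> U V =
     {pclass X (pcomp \<delta> (pcomp \<gamma> \<theta>)) | \<delta> \<theta>.
        pathin (subtopology X U) \<delta> \<and> \<delta> 0 = \<gamma> 1 \<and>
        pathin (subtopology X V) \<theta> \<and> \<theta> 1 = \<gamma> 0}"

definition UC_topology :: "'a topology \<Rightarrow> (real \<Rightarrow> 'a) set topology" where
  "UC_topology X = topology_generated_by
     (insert (Pi1 X)
       {Nset X \<gamma> U V | \<gamma> U V. pathin X \<gamma> \<and>
          openin X U \<and> \<gamma> 1 \<in> U \<and> path_connectedin X U \<and> rel_inessential X U \<and>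
          openin X V \<and> \<gamma> 0 \<in> V \<and> path_connectedin X V \<and> rel_inessential X V})"

end

theory Submission
  imports Defs
begin

text \<open>
  A CO'-open set containing \<open>[f]\<close>
  contains, for some \<open>e > 0\<close> and neighbourhoods \<open>U\<close>, \<open>V\<close> of the endpoints, the class of every
  path that follows \<open>f\<close> up to time shifts of at most \<open>e\<close>, except that near its start it may
  wander in \<open>V\<close> and near its end in \<open>U\<close>. A path \<open>\<delta> \<box> f \<box> \<theta>\<close> with \<open>\<delta>\<close>, \<open>\<theta>\<close> in small
  neighbourhoods can be reparametrised into such a path, so the set contains a basic UC
  neighbourhood of \<open>[f]\<close>.

  Conversely, subdivide \<open>[0,1]\<close> so finely that \<open>f\<close> maps each piece into a relatively
  inessential open set \<open>W k\<close>, and choose path connected open sets \<open>C k \<subseteq> W (k-1) \<inter> W k\<close>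
  around the subdivision points. Every path \<open>g\<close> in the compact-open neighbourhood of \<open>f\<close> defined by
  these sets is homotopic to \<open>\<alpha> \<box> f \<box> \<beta>\<close> with \<open>\<alpha>\<close> in \<open>C n\<close> and \<open>\<beta>\<close> in \<open>C 0\<close>, which lie
  in prescribed neighbourhoods of the endpoints: the squares formed
  by corresponding pieces of \<open>f\<close> and \<open>g\<close> and paths joining their ends inside the \<open>C k\<close> lie in
  the \<open>W k\<close> and are therefore null-homotopic. Hence every \<open>N([\<gamma>],U,V)\<close> is CO'-open.
\<close>

subsection \<open>Concatenation and homotopy of paths\<close>

lemma pathin_pcomp:
  assumes p: "pathin X p" and q: "pathin X q" and pq: "q 1 = p 0"
  shows "pathin X (pcomp p q)"
proof -
  let ?I = "subtopology euclideanreal {0..1::real}"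
  have "continuous_map ?I X (\<lambda>t. if t \<le> 1/2 then q (2*t) else p (2*t - 1))"
  proof (rule continuous_map_cases_le)
    have "continuous_map (subtopology ?I {t \<in> topspace ?I. t \<le> 1/2}) ?I (\<lambda>t. 2*t)"
      by (auto simp: continuous_map_in_subtopology
               intro!: continuous_map_from_subtopology continuous_intros)
    then show "continuous_map (subtopology ?I {t \<in> topspace ?I. t \<le> 1/2}) X (\<lambda>t. q (2*t))"
      using q unfolding pathin_def by (rule continuous_map_compose[unfolded o_def])
    have "continuous_map (subtopology ?I {t \<in> topspace ?I. 1/2 \<le> t}) ?I (\<lambda>t. 2*t - 1)"
      by (auto simp: continuous_map_in_subtopology
               intro!: continuous_map_from_subtopology continuous_intros)
    then show "continuous_map (subtopology ?I {t \<in> topspace ?I. 1/2 \<le> t}) X (\<lambda>t. p (2*t - 1))"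
      using p unfolding pathin_def by (rule continuous_map_compose[unfolded o_def])
  next
    fix t :: real
    assume "t = 1/2"
    then have "2*t = 1" "2*t - 1 = 0"
      by simp_all
    then show "q (2*t) = p (2*t - 1)"
      using pq by simp
  qed (auto simp: continuous_map_from_subtopology)
  then show ?thesis
    unfolding pathin_def pcomp_def .
qed

lemma pcomp_0 [simp]: "pcomp p q 0 = q 0"
  and pcomp_1 [simp]: "pcomp p q 1 = p 1"
  by (auto simp: pcomp_def)

lemma pcomp_first_half: "x \<in> {0..1} \<Longrightarrow> pcomp p q (x / 2) = q x"
  by (simp add: pcomp_def)

lemma pcomp_second_half: "q 1 = p 0 \<Longrightarrow> x \<in> {0..1} \<Longrightarrow> pcomp p q ((1 + x) / 2) = p x"
  by (auto simp: pcomp_def field_simps)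

lemma pathin_unit_interval_affine:
  fixes a b :: real
  assumes "0 \<le> b" "b \<le> 1" "0 \<le> a + b" "a + b \<le> 1"
  shows "pathin (top_of_set {0..1}) (\<lambda>u. a * u + b)"
proof -
  have "a * u + b \<in> {0..1}" if "u \<in> {0..1}" for u
  proof -
    have "0 \<le> (1 - u) * b + u * (a + b)"
      using that assms by (auto intro!: add_nonneg_nonneg mult_nonneg_nonneg)
    moreover have "(1 - u) * b + u * (a + b) \<le> (1 - u) * 1 + u * 1"
      using that assms by (intro add_mono mult_left_mono) auto
    ultimately show ?thesis
      by (simp add: algebra_simps)
  qed
  then show ?thesis
    by (auto simp: pathin_canon_iff path_def intro!: continuous_intros)
qed

lemma pathin_unit_interval_id: "pathin (top_of_set {0..1}) (\<lambda>u::real. u)"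
  by (simp add: pathin_canon_iff path_def)

lemma pathin_reverse:
  assumes "pathin X p"
  shows "pathin X (\<lambda>t. p (1 - t))"
  using pathin_compose[OF pathin_unit_interval_affine[of 1 "-1"] assms[unfolded pathin_def]]
  by (simp add: o_def)

lemma path_homotopic_imp_pathin:
  assumes "path_homotopic X p q"
  shows "pathin X p" "pathin X q"
  using homotopic_with_imp_continuous_maps[OF assms[unfolded path_homotopic_def]]
  by (auto simp: pathin_def)

lemma path_homotopic_endpoints:
  assumes "path_homotopic X p q"
  shows "q 0 = p 0" "q 1 = p 1"
  using homotopic_with_imp_property[OF assms[unfolded path_homotopic_def]] by auto

lemma path_homotopic_refl: "pathin X p \<Longrightarrow> path_homotopic X p p"
  by (simp add: path_homotopic_def pathin_def)

lemma path_homotopic_sym: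
  assumes "path_homotopic X p q"
  shows "path_homotopic X q p"
  using homotopic_with_symD[OF assms[unfolded path_homotopic_def]]
  unfolding path_homotopic_def path_homotopic_endpoints[OF assms] .

lemma path_homotopic_trans [trans]:
  assumes "path_homotopic X p q" "path_homotopic X q r"
  shows "path_homotopic X p r"
  using homotopic_with_trans[OF assms[unfolded path_homotopic_def
          path_homotopic_endpoints[OF assms(1)]]]
  unfolding path_homotopic_def .

text \<open>All groupoid laws for \<open>pcomp\<close> are instances: reparametrisations of a path by two self-maps
  of \<open>[0,1]\<close> with equal endpoints are homotopic, via the straight-line homotopy of the self-maps.\<close>
lemma path_homotopic_reparametrization:
  assumes p: "pathin X p"
    and \<phi>: "pathin (top_of_set {0..1}) \<phi>" and \<psi>: "pathin (top_of_set {0..1}) \<psi>"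
    and ends: "\<phi> 0 = \<psi> 0" "\<phi> 1 = \<psi> 1"
    and F: "\<And>t. t \<in> {0..1} \<Longrightarrow> F t = p (\<phi> t)"
    and G: "\<And>t. t \<in> {0..1} \<Longrightarrow> G t = p (\<psi> t)"
  shows "path_homotopic X F G"
proof -
  have "homotopic_paths {0..1} \<phi> \<psi>"
  proof (rule homotopic_paths_linear)
    show "closed_segment (\<phi> t) (\<psi> t) \<subseteq> {0..1}" if "t \<in> {0..1}" for t
      using \<phi> \<psi> that by (intro closed_segment_subset) (auto simp: pathin_canon_iff)
  qed (use \<phi> \<psi> ends in \<open>auto simp: pathin_canon_iff pathstart_def pathfinish_def\<close>)
  then have hom: "homotopic_with (\<lambda>r. r 0 = p (\<phi> 0) \<and> r 1 = p (\<phi> 1))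
                    (top_of_set {0..1}) X (p \<circ> \<phi>) (p \<circ> \<psi>)"
    unfolding homotopic_paths_def
    by (rule homotopic_with_compose_continuous_map_left)
       (use p in \<open>auto simp: pathin_def pathstart_def pathfinish_def\<close>)
  have F01: "F 0 = p (\<phi> 0)" "F 1 = p (\<phi> 1)"
    using F by auto
  show ?thesis
    unfolding path_homotopic_def F01
    by (rule homotopic_with_eq[OF hom]) (use F G in auto)
qed

lemma continuous_map_square_rescale_snd:
  fixes S :: "(real \<times> real) set" and a b :: real
  assumes "\<And>y. y \<in> S \<Longrightarrow> y \<in> {0..1} \<times> {0..1} \<Longrightarrow> a * snd y + b \<in> {0..1}"
  shows "continuous_map
           (subtopology (prod_topology (top_of_set {0..1}) (top_of_set {0..1})) S)
           (prod_topology (top_of_set {0..1}) (top_of_set {0..1})) (\<lambda>y. (fst y, a * snd y + b))"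
proof -
  let ?I = "top_of_set {0..1::real}"
  have "continuous_map (subtopology (prod_topology ?I ?I) S) euclideanreal (\<lambda>y. a * snd y + b)"
    by (intro continuous_intros continuous_map_from_subtopology
          continuous_map_into_fulltopology[OF continuous_map_snd])
  then have "continuous_map (subtopology (prod_topology ?I ?I) S) ?I (\<lambda>y. a * snd y + b)"
    using assms by (auto simp: continuous_map_in_subtopology)
  moreover have "continuous_map (subtopology (prod_topology ?I ?I) S) ?I fst"
    by (rule continuous_map_from_subtopology[OF continuous_map_fst])
  ultimately show ?thesis
    unfolding continuous_map_pairwise o_def by simp
qed

lemma path_homotopic_pcomp:
  assumes hp: "path_homotopic X p p'" and hq: "path_homotopic X q q'" and pq: "q 1 = p 0"
  shows "path_homotopic X (pcomp p q) (pcomp p' q')"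
proof -
  let ?I = "top_of_set {0..1::real}"
  let ?II = "prod_topology ?I ?I"
  obtain Hp where Hp: "continuous_map ?II X Hp" "\<forall>x. Hp (0, x) = p x" "\<forall>x. Hp (1, x) = p' x"
    "\<forall>s\<in>{0..1}. Hp (s, 0) = p 0 \<and> Hp (s, 1) = p 1"
    using hp unfolding path_homotopic_def homotopic_with_def by auto
  obtain Hq where Hq: "continuous_map ?II X Hq" "\<forall>x. Hq (0, x) = q x" "\<forall>x. Hq (1, x) = q' x"
    "\<forall>s\<in>{0..1}. Hq (s, 0) = q 0 \<and> Hq (s, 1) = q 1"
    using hq unfolding path_homotopic_def homotopic_with_def by auto
  define H where "H = (\<lambda>y. if snd y \<le> 1/2 then Hq (fst y, 2 * snd y + 0)
                                            else Hp (fst y, 2 * snd y + (-1)))"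
  have "continuous_map ?II X H"
    unfolding H_def
  proof (rule continuous_map_cases_le)
    show "continuous_map (subtopology ?II {y \<in> topspace ?II. snd y \<le> 1/2}) X
            (\<lambda>y. Hq (fst y, 2 * snd y + 0))"
      by (rule continuous_map_compose[OF continuous_map_square_rescale_snd Hq(1), unfolded o_def])
         auto
    show "continuous_map (subtopology ?II {y \<in> topspace ?II. 1/2 \<le> snd y}) X
            (\<lambda>y. Hp (fst y, 2 * snd y + (-1)))"
      by (rule continuous_map_compose[OF continuous_map_square_rescale_snd Hp(1), unfolded o_def])
         auto
  next
    fix y :: "real \<times> real"
    assume "y \<in> topspace ?II" "snd y = 1/2"
    then have "2 * snd y = 1" "fst y \<in> {0..1}"
      by auto
    then show "Hq (fst y, 2 * snd y + 0) = Hp (fst y, 2 * snd y + (-1))"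
      using Hp(4) Hq(4) pq by simp
  qed (use continuous_map_snd continuous_map_in_subtopology in blast, simp)
  then show ?thesis
    unfolding path_homotopic_def homotopic_with_def
    using Hp Hq by (intro exI[of _ H]) (auto simp: H_def pcomp_def)
qed

lemma path_homotopic_pcomp_assoc:
  assumes a: "pathin X a" and b: "pathin X b" and c: "pathin X c"
    and ends: "c 1 = b 0" "b 1 = a 0"
  shows "path_homotopic X (pcomp a (pcomp b c)) (pcomp (pcomp a b) c)"
proof -
  let ?A = "\<lambda>u::real. (1/2) * u + 1/2" and ?B = "\<lambda>u::real. (1/4) * u + 1/4"
    and ?C = "\<lambda>u::real. (1/4) * u + 0"
  have abc: "pathin X (pcomp a (pcomp b c))"
    using a b c ends by (intro pathin_pcomp) auto
  have \<psi>: "pathin (top_of_set {0..1}) (pcomp (pcomp ?A ?B) ?C)"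
    by (intro pathin_pcomp pathin_unit_interval_affine) (auto simp: pcomp_def)
  have "pcomp (pcomp a b) c t = pcomp a (pcomp b c) (pcomp (pcomp ?A ?B) ?C t)" for t
  proof -
    consider "t \<le> 1/2" | "1/2 < t" "t \<le> 3/4" | "3/4 < t"
      by linarith
    then show ?thesis
    proof cases
      case 1
      then show ?thesis
        by (auto simp: pcomp_def field_simps)
    next
      case 2
      then have "pcomp (pcomp ?A ?B) ?C t = t - 1/4"
        by (auto simp: pcomp_def field_simps)
      with 2 show ?thesis
        by (auto simp: pcomp_def field_simps intro!: arg_cong[where f = b])
    next
      case 3
      then have "pcomp (pcomp ?A ?B) ?C t = 2*t - 1"
        by (auto simp: pcomp_def field_simps)
      with 3 show ?thesis
        by (auto simp: pcomp_def field_simps intro!: arg_cong[where f = a])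
    qed
  qed
  then show ?thesis
    by (intro path_homotopic_reparametrization[OF abc pathin_unit_interval_id \<psi>])
       (auto simp: pcomp_def)
qed

lemma path_homotopic_pcomp_const_left:
  assumes "pathin X a"
  shows "path_homotopic X (pcomp (\<lambda>t. a 1) a) a"
proof -
  have "pathin (top_of_set {0..1}) (pcomp (\<lambda>u. 0 * u + 1) (\<lambda>u. 1 * u + (0::real)))"
    by (intro pathin_pcomp pathin_unit_interval_affine) auto
  then show ?thesis
    by (rule path_homotopic_reparametrization[OF assms _ pathin_unit_interval_id])
       (auto simp: pcomp_def)
qed

lemma path_homotopic_pcomp_const_right:
  assumes "pathin X a"
  shows "path_homotopic X (pcomp a (\<lambda>t. a 0)) a"
proof -
  have "pathin (top_of_set {0..1}) (pcomp (\<lambda>u. 1 * u + 0) (\<lambda>u. 0 * u + (0::real)))"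
    by (intro pathin_pcomp pathin_unit_interval_affine) auto
  then show ?thesis
    by (rule path_homotopic_reparametrization[OF assms _ pathin_unit_interval_id])
       (auto simp: pcomp_def)
qed

lemma path_homotopic_pcomp_reverse:
  assumes "pathin X a"
  shows "path_homotopic X (pcomp a (\<lambda>t. a (1 - t))) (\<lambda>t. a 1)"
proof -
  have "pathin (top_of_set {0..1}) (pcomp (\<lambda>u. 1 * u + 0) (\<lambda>u. (-1) * u + (1::real)))"
    by (intro pathin_pcomp pathin_unit_interval_affine) auto
  moreover have "pathin (top_of_set {0..1}) (\<lambda>u. 0 * u + (1::real))"
    by (intro pathin_unit_interval_affine) auto
  ultimately show ?thesis
    by (rule path_homotopic_reparametrization[OF assms]) (auto simp: pcomp_def)
qed

lemma rel_inessential_path_homotopic: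
  assumes W: "rel_inessential X W"
    and a: "pathin (subtopology X W) a" and b: "pathin (subtopology X W) b"
    and ends: "a 0 = b 0" "a 1 = b 1"
  shows "path_homotopic X a b"
proof -
  let ?b' = "\<lambda>t. b (1 - t)"
  have aX: "pathin X a" and bX: "pathin X b" and b'X: "pathin X ?b'"
    using a b pathin_reverse[of X b] by (auto simp: pathin_subtopology)
  have loop: "pathin (subtopology X W) (pcomp ?b' a)"
    using a pathin_reverse[OF b] ends by (intro pathin_pcomp) auto
  have "a 0 \<in> W"
    using a by (auto simp: pathin_subtopology)
  then have null: "path_homotopic X (pcomp ?b' a) (\<lambda>t. a 0)"
    using W loop ends unfolding rel_inessential_def by auto
  have "path_homotopic X a (pcomp (\<lambda>t. a 1) a)"
    by (rule path_homotopic_sym[OF path_homotopic_pcomp_const_left[OF aX]])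
  also have "path_homotopic X \<dots> (pcomp (pcomp b ?b') a)"
    using path_homotopic_sym[OF path_homotopic_pcomp_reverse[OF bX]] path_homotopic_refl[OF aX] ends
    by (intro path_homotopic_pcomp) auto
  also have "path_homotopic X \<dots> (pcomp b (pcomp ?b' a))"
    using ends by (intro path_homotopic_sym[OF path_homotopic_pcomp_assoc[OF bX b'X aX]]) auto
  also have "path_homotopic X \<dots> (pcomp b (\<lambda>t. a 0))"
    using ends by (intro path_homotopic_pcomp[OF path_homotopic_refl[OF bX] null]) auto
  also have "path_homotopic X \<dots> b"
    using path_homotopic_pcomp_const_right[OF bX] ends by simp
  finally show ?thesis .
qed

lemma path_homotopic_imp_pclass_eq: "path_homotopic X f g \<Longrightarrow> pclass X f = pclass X g"
  unfolding pclass_def by (auto intro: path_homotopic_trans path_homotopic_sym)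

lemma pclass_eq_imp_path_homotopic: "pclass X f = pclass X g \<Longrightarrow> pathin X g \<Longrightarrow> path_homotopic X f g"
  unfolding pclass_def using path_homotopic_refl by blast

lemma topspace_CO_topology: "topspace (CO_topology X) = paths X"
  unfolding CO_topology_def by auto

lemma openin_CO_topology_compact_open:
  assumes "compact K" "K \<subseteq> {0..1}" "openin X U"
  shows "openin (CO_topology X) {f \<in> paths X. f ` K \<subseteq> U}"
  unfolding CO_topology_def by (rule topology_generated_by_Basis) (use assms in blast)

lemma openin_COq_topology:
  "openin (COq_topology X) S \<longleftrightarrow>
     S \<subseteq> Pi1 X \<and> openin (CO_topology X) {f \<in> paths X. pclass X f \<in> S}"
  unfolding COq_topology_def quotient_topology_def
  using topology_inverse'[OF istopology_quotient[of "Pi1 X" "CO_topology X" "pclass X"]]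
  by (simp add: topspace_CO_topology)

lemma Nset_subset_Pi1: "pathin X \<gamma> \<Longrightarrow> Nset X \<gamma> U V \<subseteq> Pi1 X"
  unfolding Nset_def Pi1_def paths_def
  by (force simp: pathin_subtopology intro: pathin_pcomp)

lemma rel_inessential_subset: "rel_inessential X V \<Longrightarrow> W \<subseteq> V \<Longrightarrow> rel_inessential X W"
  unfolding rel_inessential_def by (auto simp: pathin_subtopology)

lemma semilocally_simply_connected_nbhd:
  assumes "semilocally_simply_connected X" "x \<in> topspace X"
  obtains W where "openin X W" "rel_inessential X W" "x \<in> W"
  using assms rel_inessential_subset unfolding semilocally_simply_connected_def by meson

lemma path_connected_rel_inessential_nbhd:
  assumes "locally_path_connected_space X" "semilocally_simply_connected X"
    and "openin X A" "x \<in> A"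
  obtains W where "openin X W" "x \<in> W" "path_connectedin X W" "rel_inessential X W" "W \<subseteq> A"
proof -
  obtain W0 where W0: "openin X W0" "rel_inessential X W0" "x \<in> W0"
    using semilocally_simply_connected_nbhd assms openin_subset by (metis subsetD)
  then obtain W where "openin X W" "path_connectedin X W" "x \<in> W" "W \<subseteq> W0 \<inter> A"
    using assms unfolding locally_path_connected_space by (meson IntI openin_Int)
  then show ?thesis
    using that rel_inessential_subset[OF W0(2)] by blast
qed

subsection \<open>CO'-open sets are UC-open\<close>

definition near_path :: "(real \<Rightarrow> 'a) \<Rightarrow> real \<Rightarrow> 'a set \<Rightarrow> 'a set \<Rightarrow> (real \<Rightarrow> 'a) \<Rightarrow> bool" where
  "near_path f e U V g \<longleftrightarrow>
     (\<forall>t\<in>{0..1}. (\<exists>s\<in>{0..1}. \<bar>s - t\<bar> \<le> e \<and> g t = f s) \<or> (t \<le> e \<and> g t \<in> V) \<or>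
                 (1 - e \<le> t \<and> g t \<in> U))"

text \<open>Every compact-open set is near-open, and this is all that the inclusion of the CO' topology
  in the UC topology uses about the compact-open topology.\<close>
definition near_open :: "'a topology \<Rightarrow> (real \<Rightarrow> 'a) set \<Rightarrow> bool" where
  "near_open X P \<longleftrightarrow>
     (\<forall>f\<in>P. \<exists>e>0. \<exists>U V. openin X U \<and> f 1 \<in> U \<and> openin X V \<and> f 0 \<in> V \<and>
                        (\<forall>g\<in>paths X. near_path f e U V g \<longrightarrow> g \<in> P))"

lemma near_path_mono:
  "near_path f e U V g \<Longrightarrow> e \<le> e' \<Longrightarrow> U \<subseteq> U' \<Longrightarrow> V \<subseteq> V' \<Longrightarrow> near_path f e' U' V' g"
  unfolding near_path_def by (smt (verit, ccfv_SIG) subsetD)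

lemma near_open_Int:
  assumes "near_open X P" "near_open X Q"
  shows "near_open X (P \<inter> Q)"
  unfolding near_open_def
proof
  fix f
  assume "f \<in> P \<inter> Q"
  then obtain e1 U1 V1 e2 U2 V2 where
    P: "e1 > 0" "openin X U1" "f 1 \<in> U1" "openin X V1" "f 0 \<in> V1"
       "\<forall>g\<in>paths X. near_path f e1 U1 V1 g \<longrightarrow> g \<in> P" and
    Q: "e2 > 0" "openin X U2" "f 1 \<in> U2" "openin X V2" "f 0 \<in> V2"
       "\<forall>g\<in>paths X. near_path f e2 U2 V2 g \<longrightarrow> g \<in> Q"
    using assms unfolding near_open_def by (metis IntD1 IntD2)
  show "\<exists>e>0. \<exists>U V. openin X U \<and> f 1 \<in> U \<and> openin X V \<and> f 0 \<in> V \<and>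
                     (\<forall>g\<in>paths X. near_path f e U V g \<longrightarrow> g \<in> P \<inter> Q)"
  proof (intro exI conjI ballI impI)
    show "min e1 e2 > 0" "openin X (U1 \<inter> U2)" "openin X (V1 \<inter> V2)"
      "f 1 \<in> U1 \<inter> U2" "f 0 \<in> V1 \<inter> V2"
      using P Q by auto
    fix g
    assume "g \<in> paths X" "near_path f (min e1 e2) (U1 \<inter> U2) (V1 \<inter> V2) g"
    then show "g \<in> P \<inter> Q"
      using P(6) Q(6) near_path_mono[of f "min e1 e2" "U1 \<inter> U2" "V1 \<inter> V2" g] by auto
  qed
qed

lemma path_uniformly_maps_nbhd_of_compact:
  assumes f: "pathin X f" and W: "openin X W" and K: "compact K" "K \<subseteq> {0..1}" "f ` K \<subseteq> W"
  obtains e where "e > 0" "\<And>k s. k \<in> K \<Longrightarrow> s \<in> {0..1} \<Longrightarrow> \<bar>s - k\<bar> \<le> e \<Longrightarrow> f s \<in> W"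
proof -
  have "openin (top_of_set {0..1}) {s \<in> topspace (top_of_set {0..1}). f s \<in> W}"
    using f W unfolding pathin_def by (rule openin_continuous_map_preimage)
  then obtain T where T: "open T" "{s \<in> {0..1}. f s \<in> W} = {0..1} \<inter> T"
    by (auto simp: openin_open)
  moreover have "K \<subseteq> T"
    using K T(2) by blast
  ultimately obtain e where e: "e > 0" "(\<Union>k\<in>K. cball k e) \<subseteq> T"
    using compact_subset_open_imp_cball_epsilon_subset[OF K(1) T(1)] by blast
  have "f s \<in> W" if "k \<in> K" "s \<in> {0..1}" "\<bar>s - k\<bar> \<le> e" for k s
  proof -
    have "s \<in> cball k e"
      using that by (simp add: dist_real_def abs_minus_commute)
    then show ?thesis
      using e(2) T(2) that by blast
  qed
  then show ?thesis
    using that e(1) by blast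
qed

text \<open>A near path can leave the values of \<open>f\<close> only close to an endpoint of \<open>[0,1]\<close>; if such an
  endpoint is within \<open>e\<close> of \<open>K\<close>, its image under \<open>f\<close> lies in \<open>W\<close>, so \<open>W\<close> can serve as \<open>U\<close> or \<open>V\<close>.\<close>
lemma near_open_compact_open:
  assumes K: "compact K" "K \<subseteq> {0..1}" and W: "openin X W"
  shows "near_open X {f \<in> paths X. f ` K \<subseteq> W}"
  unfolding near_open_def
proof
  fix f
  assume "f \<in> {f \<in> paths X. f ` K \<subseteq> W}"
  then have f: "pathin X f" "f ` K \<subseteq> W"
    by (auto simp: paths_def)
  obtain e where e: "e > 0" "\<And>k s. k \<in> K \<Longrightarrow> s \<in> {0..1} \<Longrightarrow> \<bar>s - k\<bar> \<le> e \<Longrightarrow> f s \<in> W"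
    using path_uniformly_maps_nbhd_of_compact[OF f(1) W K f(2)] by blast
  define U where "U = (if f 1 \<in> W then W else topspace X)"
  define V where "V = (if f 0 \<in> W then W else topspace X)"
  have "g k \<in> W" if g: "near_path f e U V g" and kK: "k \<in> K" for g k
  proof -
    have k: "k \<in> {0..1}"
      using kK K by blast
    consider s where "s \<in> {0..1}" "\<bar>s - k\<bar> \<le> e" "g k = f s"
      | "k \<le> e" "g k \<in> V" | "1 - e \<le> k" "g k \<in> U"
      using g k unfolding near_path_def by blast
    then show ?thesis
    proof cases
      case 1
      then show ?thesis
        using e(2)[OF kK] by simp
    next
      case 2
      then have "f 0 \<in> W"
        using e(2)[OF kK, of 0] k by simp
      then show ?thesis
        using 2 by (simp add: V_def)
    next
      case 3
      then have "f 1 \<in> W"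
        using e(2)[OF kK, of 1] k by simp
      then show ?thesis
        using 3 by (simp add: U_def)
    qed
  qed
  moreover have "openin X U" "openin X V" "f 1 \<in> U" "f 0 \<in> V"
    using W f(1) by (auto simp: U_def V_def path_start_in_topspace path_finish_in_topspace)
  ultimately show "\<exists>e>0. \<exists>U V. openin X U \<and> f 1 \<in> U \<and> openin X V \<and> f 0 \<in> V \<and>
                     (\<forall>g\<in>paths X. near_path f e U V g \<longrightarrow> g \<in> {f \<in> paths X. f ` K \<subseteq> W})"
    using e(1) by (intro exI[of _ e] exI[of _ U] exI[of _ V]) auto
qed

lemma openin_CO_topology_imp_near_open:
  assumes "openin (CO_topology X) P"
  shows "near_open X P"
proof -
  have "generate_topology_on (insert (paths X)
          {{f \<in> paths X. f ` K \<subseteq> U} | K U. compact K \<and> K \<subseteq> {0..1} \<and> openin X U}) P"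
    using assms by (simp add: CO_topology_def openin_topology_generated_by_iff)
  then show ?thesis
  proof induction
    case (Basis s)
    have "paths X = {f \<in> paths X. f ` {} \<subseteq> topspace X}"
      by simp
    then show ?case
      using Basis near_open_compact_open[of "{}" X "topspace X"] near_open_compact_open
      by auto
  next
    case (Int a b)
    then show ?case
      by (intro near_open_Int)
  next
    case (UN K)
    then show ?case
      unfolding near_open_def by (meson UnionE UnionI)
  qed (simp add: near_open_def)
qed

lemma divide_in_unit_interval: "0 \<le> a \<Longrightarrow> a \<le> b \<Longrightarrow> a / b \<in> {0..1::real}"
  by (cases "b = 0") (auto simp: divide_le_eq_1)

text \<open>Maps \<open>[0,e]\<close>, \<open>[e,1-e]\<close> and \<open>[1-e,1]\<close> affinely onto \<open>[0,1/4]\<close>, \<open>[1/4,1/2]\<close> and \<open>[1/2,1]\<close>,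
  where \<open>\<delta> \<box> f \<box> \<theta>\<close> runs through \<open>\<theta>\<close>, \<open>f\<close> and \<open>\<delta>\<close>; so the reparametrised path spends only
  time \<open>e\<close> on each of \<open>\<theta>\<close> and \<open>\<delta>\<close>.\<close>
definition end_squeeze :: "real \<Rightarrow> real \<Rightarrow> real" where
  "end_squeeze e t =
     (if t \<le> e then t / e / 4
      else if t \<le> 1 - e then (1 + (t - e) / (1 - 2*e)) / 4
      else (1 + (t - (1 - e)) / e) / 2)"

lemma end_squeeze_0 [simp]: "0 < e \<Longrightarrow> end_squeeze e 0 = 0"
  and end_squeeze_1 [simp]: "0 < e \<Longrightarrow> e \<le> 1/4 \<Longrightarrow> end_squeeze e 1 = 1"
  by (auto simp: end_squeeze_def)

lemma end_squeeze_cases: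
  assumes e: "0 < e" "e \<le> 1/4" and t: "t \<in> {0..1}"
  obtains x where "t \<le> e" "x \<in> {0..1}" "end_squeeze e t = x / 4" "t / e = x"
    | x where "e < t" "t \<le> 1 - e" "x \<in> {0<..1}" "end_squeeze e t = (1 + x) / 4" "(t - e) / (1 - 2*e) = x"
    | x where "1 - e < t" "x \<in> {0<..1}" "end_squeeze e t = (1 + x) / 2"
proof -
  consider "t \<le> e" | "e < t" "t \<le> 1 - e" | "1 - e < t"
    by linarith
  then show ?thesis
  proof cases
    case 1
    show ?thesis
      by (rule that(1)[of "t / e"])
         (use 1 t divide_in_unit_interval[of t e] in \<open>simp_all add: end_squeeze_def\<close>)
  next
    case 2
    then have "(t - e) / (1 - 2*e) \<in> {0<..1}"
      using e divide_in_unit_interval[of "t - e" "1 - 2*e"] by auto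
    then show ?thesis
      by (intro that(2)[of "(t - e) / (1 - 2*e)"]) (use 2 in \<open>simp_all add: end_squeeze_def\<close>)
  next
    case 3
    then have "(t - (1 - e)) / e \<in> {0<..1}"
      using e t divide_in_unit_interval[of "t - (1 - e)" e] by auto
    then show ?thesis
      by (intro that(3)[of "(t - (1 - e)) / e"]) (use 3 e in \<open>simp_all add: end_squeeze_def\<close>)
  qed
qed

lemma pathin_end_squeeze:
  assumes e: "0 < e" "e \<le> 1/4"
  shows "pathin (top_of_set {0..1}) (end_squeeze e)"
proof -
  have "continuous_on {0..1} (end_squeeze e)"
    unfolding end_squeeze_def
  proof (rule continuous_on_cases_le[where h = "\<lambda>t. t"])
    show "continuous_on {t \<in> {0..1}. e \<le> t}
            (\<lambda>t. if t \<le> 1 - e then (1 + (t - e) / (1 - 2*e)) / 4 else (1 + (t - (1 - e)) / e) / 2)"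
    proof (rule continuous_on_cases_le[where h = "\<lambda>t. t"])
      show "continuous_on {t \<in> {t \<in> {0..1}. e \<le> t}. t \<le> 1 - e} (\<lambda>t. (1 + (t - e) / (1 - 2*e)) / 4)"
        using e by (intro continuous_intros) auto
    qed (use e in \<open>auto intro!: continuous_intros\<close>)
  qed (use e in \<open>auto intro!: continuous_intros\<close>)
  moreover have "end_squeeze e t \<in> {0..1}" if "t \<in> {0..1}" for t
    using end_squeeze_cases[OF e that] by cases auto
  ultimately show ?thesis
    by (auto simp: pathin_canon_iff path_def)
qed

lemma rescale_displacement:
  fixes e t :: real
  assumes "0 < e" "e \<le> 1/4" "t \<in> {0..1}"
  shows "\<bar>(t - e) / (1 - 2*e) - t\<bar> \<le> 2 * e"
proof -
  have "(t - e) / (1 - 2*e) - t = e * (2*t - 1) / (1 - 2*e)"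
    using assms by (simp add: field_simps)
  moreover have "\<bar>e * (2*t - 1)\<bar> \<le> e"
    using assms by (simp add: abs_mult abs_le_iff)
  moreover have "e \<le> 2 * e * (1 - 2*e)"
    using assms by (simp add: algebra_simps)
  moreover have "0 < 1 - 2*e"
    using assms by simp
  ultimately show ?thesis
    by (simp add: abs_divide pos_divide_le_eq)
qed

lemma near_path_end_squeeze:
  assumes e: "0 < e" "e \<le> 1/4"
    and \<delta>: "\<delta> ` {0..1} \<subseteq> U" "\<delta> 0 = f 1" and \<theta>: "\<theta> ` {0..1} \<subseteq> V" "\<theta> 1 = f 0"
  shows "near_path f (2 * e) U V (pcomp \<delta> (pcomp f \<theta>) \<circ> end_squeeze e)"
  unfolding near_path_def
proof
  fix t :: real
  assume t: "t \<in> {0..1}"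
  let ?g = "pcomp \<delta> (pcomp f \<theta>) \<circ> end_squeeze e"
  from end_squeeze_cases[OF e t]
  show "(\<exists>s\<in>{0..1}. \<bar>s - t\<bar> \<le> 2 * e \<and> ?g t = f s) \<or> (t \<le> 2 * e \<and> ?g t \<in> V) \<or>
        (1 - 2 * e \<le> t \<and> ?g t \<in> U)"
  proof cases
    case (1 x)
    have "?g t = \<theta> x"
      unfolding o_def 1(3)
      using 1(2) pcomp_first_half[of "x/2" \<delta> "pcomp f \<theta>"] pcomp_first_half[of x f \<theta>] by simp
    then show ?thesis
      using 1(1,2) \<theta>(1) e by (auto simp: image_subset_iff)
  next
    case (2 x)
    have "?g t = f x"
      unfolding o_def 2(4)
      using 2(3) pcomp_first_half[of "(1 + x)/2" \<delta> "pcomp f \<theta>"] pcomp_second_half[of \<theta> f x] \<theta>(2)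
      by simp
    moreover have "\<bar>x - t\<bar> \<le> 2 * e"
      using rescale_displacement[OF e t] 2 by simp
    ultimately show ?thesis
      using 2(3) by (intro disjI1 bexI[of _ x]) auto
  next
    case (3 x)
    have "?g t = \<delta> x"
      unfolding o_def 3(3) using 3(2) pcomp_second_half[of "pcomp f \<theta>" \<delta> x] \<delta>(2) by simp
    then show ?thesis
      using 3(1,2) \<delta>(1) e by (auto simp: image_subset_iff)
  qed
qed

lemma Nset_subset_pclass_near_paths:
  assumes f: "pathin X f" and e: "0 < e"
  shows "Nset X f U V \<subseteq> pclass X ` {g \<in> paths X. near_path f e U V g}"
proof
  fix d
  assume "d \<in> Nset X f U V"
  then obtain \<delta> \<theta> where d: "d = pclass X (pcomp \<delta> (pcomp f \<theta>))"
    and \<delta>: "pathin (subtopology X U) \<delta>" "\<delta> 0 = f 1"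
    and \<theta>: "pathin (subtopology X V) \<theta>" "\<theta> 1 = f 0"
    unfolding Nset_def by blast
  define e' where "e' = min e 1 / 4"
  have e': "0 < e'" "e' \<le> 1/4" "2 * e' \<le> e"
    using e by (auto simp: e'_def)
  define h where "h = pcomp \<delta> (pcomp f \<theta>)"
  have "pathin X h"
    using f \<delta> \<theta> unfolding h_def by (auto simp: pathin_subtopology intro!: pathin_pcomp)
  then have hom: "path_homotopic X h (h \<circ> end_squeeze e')"
    by (rule path_homotopic_reparametrization[OF _ pathin_unit_interval_id pathin_end_squeeze[OF e'(1,2)]])
       (use e' in auto)
  have "near_path f (2 * e') U V (h \<circ> end_squeeze e')"
    unfolding h_def using \<delta> \<theta> by (intro near_path_end_squeeze e') (auto simp: pathin_subtopology)
  then have "near_path f e U V (h \<circ> end_squeeze e')"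
    using e'(3) by (rule near_path_mono) auto
  moreover have "d = pclass X (h \<circ> end_squeeze e')"
    using d path_homotopic_imp_pclass_eq[OF hom] by (simp add: h_def)
  ultimately show "d \<in> pclass X ` {g \<in> paths X. near_path f e U V g}"
    using path_homotopic_imp_pathin(2)[OF hom] by (auto simp: paths_def)
qed

lemma openin_UC_topology_Nset:
  assumes "pathin X \<gamma>"
    and "openin X U" "\<gamma> 1 \<in> U" "path_connectedin X U" "rel_inessential X U"
    and "openin X V" "\<gamma> 0 \<in> V" "path_connectedin X V" "rel_inessential X V"
  shows "openin (UC_topology X) (Nset X \<gamma> U V)"
  unfolding UC_topology_def by (rule topology_generated_by_Basis) (use assms in blast)

lemma pclass_in_Nset:
  assumes f: "pathin X f" and "f 1 \<in> U" "f 0 \<in> V"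
  shows "pclass X f \<in> Nset X f U V"
proof -
  have "path_homotopic X (pcomp (\<lambda>t. f 1) (pcomp f (\<lambda>t. f 0))) (pcomp (\<lambda>t. f 1) f)"
    using f path_homotopic_pcomp_const_right[OF f] path_finish_in_topspace[OF f]
    by (intro path_homotopic_pcomp path_homotopic_refl) auto
  also have "path_homotopic X \<dots> f"
    by (rule path_homotopic_pcomp_const_left[OF f])
  finally have "pclass X f = pclass X (pcomp (\<lambda>t. f 1) (pcomp f (\<lambda>t. f 0)))"
    by (metis path_homotopic_imp_pclass_eq)
  then show ?thesis
    unfolding Nset_def using assms path_start_in_topspace path_finish_in_topspace by fastforce
qed

lemma openin_COq_imp_openin_UC:
  assumes lpc: "locally_path_connected_space X" and slsc: "semilocally_simply_connected X"
    and S: "openin (COq_topology X) S"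
  shows "openin (UC_topology X) S"
proof -
  define P where "P = {f \<in> paths X. pclass X f \<in> S}"
  have SP: "S \<subseteq> Pi1 X" and P: "near_open X P"
    using S openin_CO_topology_imp_near_open unfolding openin_COq_topology P_def by auto
  show ?thesis
  proof (subst openin_subopen, intro ballI)
    fix c
    assume "c \<in> S"
    then obtain f where f: "pathin X f" "c = pclass X f" "f \<in> P"
      using SP unfolding Pi1_def paths_def P_def by auto
    then obtain e U V where UV: "e > 0" "openin X U" "f 1 \<in> U" "openin X V" "f 0 \<in> V"
      and near: "\<And>g. g \<in> paths X \<Longrightarrow> near_path f e U V g \<Longrightarrow> g \<in> P"
      using P unfolding near_open_def by blast
    obtain U' where U': "openin X U'" "f 1 \<in> U'" "path_connectedin X U'" "rel_inessential X U'"
      "U' \<subseteq> U"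
      using path_connected_rel_inessential_nbhd[OF lpc slsc UV(2,3)] by blast
    obtain V' where V': "openin X V'" "f 0 \<in> V'" "path_connectedin X V'" "rel_inessential X V'"
      "V' \<subseteq> V"
      using path_connected_rel_inessential_nbhd[OF lpc slsc UV(4,5)] by blast
    have "Nset X f U' V' \<subseteq> pclass X ` {g \<in> paths X. near_path f e U' V' g}"
      by (rule Nset_subset_pclass_near_paths[OF f(1) UV(1)])
    also have "\<dots> \<subseteq> pclass X ` P"
      using near near_path_mono[OF _ order_refl U'(5) V'(5)] by blast
    also have "\<dots> \<subseteq> S"
      by (auto simp: P_def)
    finally have "Nset X f U' V' \<subseteq> S" .
    then show "\<exists>T. openin (UC_topology X) T \<and> c \<in> T \<and> T \<subseteq> S"
      using openin_UC_topology_Nset[OF f(1) U'(1-4) V'(1-4)] pclass_in_Nset[OF f(1) U'(2) V'(2)] f(2)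
      by blast
  qed
qed

subsection \<open>UC-open sets are CO'-open\<close>

text \<open>The part of \<open>h\<close> between times \<open>u\<close> and \<open>v\<close>, as a path; the library's \<open>subpath\<close> is restricted
  to normed vector spaces.\<close>
definition segpath :: "real \<Rightarrow> real \<Rightarrow> (real \<Rightarrow> 'a) \<Rightarrow> real \<Rightarrow> 'a" where
  "segpath u v h = (\<lambda>t. h ((v - u) * t + u))"

lemma segpath_0 [simp]: "segpath u v h 0 = h u"
  and segpath_1 [simp]: "segpath u v h 1 = h v"
  by (simp_all add: segpath_def)

lemma segpath_0_1 [simp]: "segpath 0 1 h = h"
  by (simp add: segpath_def)

lemma segpath_const: "segpath u u h = (\<lambda>t. h u)"
  by (simp add: segpath_def)

lemma pathin_segpath:
  assumes "pathin X h" "u \<in> {0..1}" "v \<in> {0..1}"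
  shows "pathin X (segpath u v h)"
  using pathin_compose[OF pathin_unit_interval_affine[of u "v - u"] assms(1)[unfolded pathin_def]]
    assms(2,3) by (simp add: segpath_def o_def)

lemma pathin_subtopology_segpath:
  assumes "pathin X h" "0 \<le> u" "u \<le> v" "v \<le> 1" "h ` {u..v} \<subseteq> W"
  shows "pathin (subtopology X W) (segpath u v h)"
proof -
  have "segpath u v h t \<in> W" if "t \<in> {0..1}" for t
  proof -
    have "(v - u) * t + u \<in> {u..v}"
      using that assms mult_left_mono[of t 1 "v - u"] by auto
    then show ?thesis
      using assms(5) by (auto simp: segpath_def)
  qed
  moreover have "pathin X (segpath u v h)"
    using assms by (intro pathin_segpath) auto
  ultimately show ?thesis
    by (auto simp: pathin_subtopology)
qed

lemma path_homotopic_segpath_join: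
  assumes "pathin X h" "u \<in> {0..1}" "v \<in> {0..1}" "w \<in> {0..1}"
  shows "path_homotopic X (pcomp (segpath v w h) (segpath u v h)) (segpath u w h)"
proof -
  have "pathin (top_of_set {0..1}) (pcomp (\<lambda>t. (w - v) * t + v) (\<lambda>t. (v - u) * t + u))"
    using assms by (intro pathin_pcomp pathin_unit_interval_affine) auto
  moreover have "pathin (top_of_set {0..1}) (\<lambda>t. (w - u) * t + u)"
    using assms by (intro pathin_unit_interval_affine) auto
  ultimately show ?thesis
    by (rule path_homotopic_reparametrization[OF assms(1)]) (auto simp: pcomp_def segpath_def)
qed

lemma path_homotopic_extend_by_square:
  assumes hom: "path_homotopic X p (pcomp \<alpha> (pcomp q \<beta>))"
    and square: "path_homotopic X (pcomp a \<alpha>) (pcomp \<alpha>' b)"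
    and paths: "pathin X a" "pathin X b" "pathin X q" "pathin X \<beta>" "pathin X \<alpha>" "pathin X \<alpha>'"
    and ends: "\<beta> 1 = q 0" "q 1 = \<alpha> 0" "\<alpha> 1 = a 0" "\<alpha>' 0 = b 1"
  shows "path_homotopic X (pcomp a p) (pcomp \<alpha>' (pcomp (pcomp b q) \<beta>))"
proof -
  have b0: "b 0 = q 1"
    using path_homotopic_endpoints(1)[OF square] ends by simp
  have q\<beta>: "pathin X (pcomp q \<beta>)"
    using paths ends by (intro pathin_pcomp)
  have "path_homotopic X (pcomp a p) (pcomp a (pcomp \<alpha> (pcomp q \<beta>)))"
    using path_homotopic_endpoints(2)[OF hom] ends
    by (intro path_homotopic_pcomp[OF path_homotopic_refl[OF paths(1)] hom]) simp
  also have "path_homotopic X \<dots> (pcomp (pcomp a \<alpha>) (pcomp q \<beta>))"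
    using paths ends by (intro path_homotopic_pcomp_assoc q\<beta>) simp_all
  also have "path_homotopic X \<dots> (pcomp (pcomp \<alpha>' b) (pcomp q \<beta>))"
    using ends by (intro path_homotopic_pcomp[OF square path_homotopic_refl[OF q\<beta>]]) simp
  also have "path_homotopic X \<dots> (pcomp \<alpha>' (pcomp b (pcomp q \<beta>)))"
    using paths ends b0
    by (intro path_homotopic_sym[OF path_homotopic_pcomp_assoc] q\<beta>) simp_all
  also have "path_homotopic X \<dots> (pcomp \<alpha>' (pcomp (pcomp b q) \<beta>))"
    using paths ends b0
    by (intro path_homotopic_pcomp path_homotopic_refl path_homotopic_pcomp_assoc pathin_pcomp)
       simp_all
  finally show ?thesis .
qed

lemma path_connectedin_obtain_path:
  assumes "path_connectedin X C" "x \<in> C" "y \<in> C"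
  obtains a where "pathin (subtopology X C) a" "a 0 = x" "a 1 = y"
proof -
  obtain a where "pathin X a" "a \<in> {0..1} \<rightarrow> C" "a 0 = x" "a 1 = y"
    using assms unfolding path_connectedin by blast
  then show ?thesis
    using that by (auto simp: pathin_subtopology)
qed

text \<open>A chain of length \<open>n\<close>: relatively inessential sets \<open>W k\<close>, one for each interval
  \<open>[k/n, (k+1)/n]\<close>, linked by path connected sets \<open>C k \<subseteq> W (k-1) \<inter> W k\<close> around the points \<open>k/n\<close>.\<close>
definition inessential_chain :: "'a topology \<Rightarrow> nat \<Rightarrow> (nat \<Rightarrow> 'a set) \<Rightarrow> (nat \<Rightarrow> 'a set) \<Rightarrow> bool"
  where "inessential_chain X n W C \<longleftrightarrow> 0 < n \<and>
     (\<forall>k<n. rel_inessential X (W k) \<and> C k \<subseteq> W k \<and> C (Suc k) \<subseteq> W k) \<and>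
     (\<forall>k\<le>n. path_connectedin X (C k))"

definition follows_chain ::
    "'a topology \<Rightarrow> nat \<Rightarrow> (nat \<Rightarrow> 'a set) \<Rightarrow> (nat \<Rightarrow> 'a set) \<Rightarrow> (real \<Rightarrow> 'a) \<Rightarrow> bool"
  where "follows_chain X n W C g \<longleftrightarrow> pathin X g \<and>
     (\<forall>k<n. g ` {real k / n..real (Suc k) / n} \<subseteq> W k) \<and> (\<forall>k\<le>n. g (real k / n) \<in> C k)"

lemma inessential_chainD:
  assumes "inessential_chain X n W C"
  shows "0 < n" "k < n \<Longrightarrow> rel_inessential X (W k)" "k < n \<Longrightarrow> C k \<subseteq> W k"
    "k < n \<Longrightarrow> C (Suc k) \<subseteq> W k" "k \<le> n \<Longrightarrow> path_connectedin X (C k)"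
  using assms by (auto simp: inessential_chain_def)

lemma follows_chainD:
  assumes "follows_chain X n W C g"
  shows "pathin X g" "k < n \<Longrightarrow> g ` {real k / n..real (Suc k) / n} \<subseteq> W k"
    "k \<le> n \<Longrightarrow> g (real k / n) \<in> C k"
  using assms by (auto simp: follows_chain_def)

text \<open>The square formed by the pieces of \<open>f\<close> and \<open>g\<close> over \<open>[m/n, (m+1)/n]\<close> and the paths
  \<open>\<alpha>\<close>, \<open>\<alpha>'\<close> joining their ends lies in the relatively inessential set \<open>W m\<close>.\<close>
lemma prefix_homotopic_along_chain_Suc:
  assumes chain: "inessential_chain X n W C"
    and f: "follows_chain X n W C f" and g: "follows_chain X n W C g"
    and m: "m < n" and \<beta>: "pathin X \<beta>" "\<beta> 1 = f 0"
    and \<alpha>: "pathin (subtopology X (C m)) \<alpha>" "\<alpha> 0 = f (real m / n)" "\<alpha> 1 = g (real m / n)"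
    and hom: "path_homotopic X (segpath 0 (real m / n) g)
                (pcomp \<alpha> (pcomp (segpath 0 (real m / n) f) \<beta>))"
  obtains \<alpha>' where "pathin (subtopology X (C (Suc m))) \<alpha>'"
    "\<alpha>' 0 = f (real (Suc m) / n)" "\<alpha>' 1 = g (real (Suc m) / n)"
    "path_homotopic X (segpath 0 (real (Suc m) / n) g)
       (pcomp \<alpha>' (pcomp (segpath 0 (real (Suc m) / n) f) \<beta>))"
proof -
  let ?x = "\<lambda>k. real k / real n"
  let ?sf = "segpath (?x m) (?x (Suc m)) f" and ?sg = "segpath (?x m) (?x (Suc m)) g"
  note fX = follows_chainD(1)[OF f] and gX = follows_chainD(1)[OF g]
  obtain \<alpha>' where \<alpha>': "pathin (subtopology X (C (Suc m))) \<alpha>'" "\<alpha>' 0 = f (?x (Suc m))"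
    "\<alpha>' 1 = g (?x (Suc m))"
    using path_connectedin_obtain_path inessential_chainD(5)[OF chain] follows_chainD(3)[OF f]
      follows_chainD(3)[OF g] m by (metis Suc_leI)
  have le: "0 \<le> ?x m" "?x m \<le> ?x (Suc m)" "?x (Suc m) \<le> 1"
    using m by (auto simp: divide_right_mono divide_le_eq_1)
  have "pathin (subtopology X (W m)) \<alpha>" "pathin (subtopology X (W m)) \<alpha>'"
    using \<alpha>(1) \<alpha>'(1) inessential_chainD(3,4)[OF chain m] by (auto simp: pathin_subtopology)
  then have "path_homotopic X (pcomp ?sg \<alpha>) (pcomp \<alpha>' ?sf)"
    using pathin_subtopology_segpath[OF gX le follows_chainD(2)[OF g m]]
      pathin_subtopology_segpath[OF fX le follows_chainD(2)[OF f m]] \<alpha> \<alpha>'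
    by (intro rel_inessential_path_homotopic[OF inessential_chainD(2)[OF chain m]] pathin_pcomp)
       auto
  then have "path_homotopic X (pcomp ?sg (segpath 0 (?x m) g))
               (pcomp \<alpha>' (pcomp (pcomp ?sf (segpath 0 (?x m) f)) \<beta>))"
    using le \<alpha> \<alpha>' \<beta> fX gX
    by (intro path_homotopic_extend_by_square[OF hom] pathin_segpath)
       (auto simp: pathin_subtopology)
  also have "path_homotopic X \<dots> (pcomp \<alpha>' (pcomp (segpath 0 (?x (Suc m)) f) \<beta>))"
    using le \<alpha>' \<beta> fX
    by (intro path_homotopic_pcomp path_homotopic_refl path_homotopic_segpath_join)
       (auto simp: pathin_subtopology)
  finally have "path_homotopic X (segpath 0 (?x (Suc m)) g)
                  (pcomp \<alpha>' (pcomp (segpath 0 (?x (Suc m)) f) \<beta>))"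
    using le gX by (intro path_homotopic_trans[OF path_homotopic_sym[OF path_homotopic_segpath_join]])
                   auto
  with \<alpha>' show ?thesis
    using that by blast
qed

lemma prefix_homotopic_along_chain:
  assumes chain: "inessential_chain X n W C"
    and f: "follows_chain X n W C f" and g: "follows_chain X n W C g"
    and \<beta>: "pathin (subtopology X (C 0)) \<beta>" "\<beta> 0 = g 0" "\<beta> 1 = f 0"
    and "m \<le> n"
  shows "\<exists>\<alpha>. pathin (subtopology X (C m)) \<alpha> \<and> \<alpha> 0 = f (real m / n) \<and> \<alpha> 1 = g (real m / n) \<and>
             path_homotopic X (segpath 0 (real m / n) g)
               (pcomp \<alpha> (pcomp (segpath 0 (real m / n) f) \<beta>))"
  using \<open>m \<le> n\<close>
proof (induction m)
  case 0
  have C0: "path_connectedin X (C 0)" "C 0 \<subseteq> W 0" "f 0 \<in> C 0" "g 0 \<in> C 0"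
    using inessential_chainD[OF chain] follows_chainD(3)[OF f, of 0] follows_chainD(3)[OF g, of 0]
    by auto
  then obtain \<alpha> where \<alpha>: "pathin (subtopology X (C 0)) \<alpha>" "\<alpha> 0 = f 0" "\<alpha> 1 = g 0"
    using path_connectedin_obtain_path by metis
  have "path_homotopic X (\<lambda>t. g 0) (pcomp \<alpha> (pcomp (\<lambda>t. f 0) \<beta>))"
    using inessential_chainD(1,2)[OF chain] C0 \<alpha> \<beta> follows_chainD(1)[OF f] follows_chainD(1)[OF g]
    by (intro rel_inessential_path_homotopic[of X "W 0"] pathin_pcomp)
       (auto simp: pathin_subtopology path_start_in_topspace)
  then show ?case
    using \<alpha> by (auto simp: segpath_const)
next
  case (Suc m)
  then have m: "m < n"
    by simp
  obtain \<alpha> where \<alpha>: "pathin (subtopology X (C m)) \<alpha>" "\<alpha> 0 = f (real m / n)" "\<alpha> 1 = g (real m / n)"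
    "path_homotopic X (segpath 0 (real m / n) g) (pcomp \<alpha> (pcomp (segpath 0 (real m / n) f) \<beta>))"
    using Suc by auto
  have "pathin X \<beta>"
    using \<beta>(1) by (simp add: pathin_subtopology)
  from prefix_homotopic_along_chain_Suc[OF chain f g m this \<beta>(3) \<alpha>] show ?case
    by blast
qed

lemma homotopic_along_chain:
  assumes chain: "inessential_chain X n W C"
    and f: "follows_chain X n W C f" and g: "follows_chain X n W C g"
  obtains \<alpha> \<beta> where "pathin (subtopology X (C n)) \<alpha>" "\<alpha> 0 = f 1" "\<alpha> 1 = g 1"
    "pathin (subtopology X (C 0)) \<beta>" "\<beta> 0 = g 0" "\<beta> 1 = f 0"
    "path_homotopic X g (pcomp \<alpha> (pcomp f \<beta>))"
proof -
  have n: "0 < n"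
    using chain by (simp add: inessential_chain_def)
  have "path_connectedin X (C 0)" "g 0 \<in> C 0" "f 0 \<in> C 0"
    using chain f g by (auto simp: inessential_chain_def follows_chain_def)
  then obtain \<beta> where \<beta>: "pathin (subtopology X (C 0)) \<beta>" "\<beta> 0 = g 0" "\<beta> 1 = f 0"
    by (rule path_connectedin_obtain_path)
  with prefix_homotopic_along_chain[OF chain f g \<beta> order_refl] n show ?thesis
    using that by auto
qed

lemma openin_CO_topology_follows_chain:
  assumes "\<And>k. k < n \<Longrightarrow> openin X (W k)" "\<And>k. k \<le> n \<Longrightarrow> openin X (C k)"
  shows "openin (CO_topology X) {g. follows_chain X n W C g}"
proof -
  have "openin (CO_topology X)
          ((\<Inter>k<n. {g \<in> paths X. g ` {real k / n..real (Suc k) / n} \<subseteq> W k}) \<inter> topspace (CO_topology X))"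
    using assms by (intro openin_INT openin_CO_topology_compact_open) (auto simp: divide_le_eq_1)
  moreover have "openin (CO_topology X)
          ((\<Inter>k\<le>n. {g \<in> paths X. g ` {real k / n} \<subseteq> C k}) \<inter> topspace (CO_topology X))"
    using assms by (intro openin_INT openin_CO_topology_compact_open) (auto simp: divide_le_eq_1)
  ultimately have "openin (CO_topology X)
    (((\<Inter>k<n. {g \<in> paths X. g ` {real k / n..real (Suc k) / n} \<subseteq> W k}) \<inter> paths X) \<inter>
     ((\<Inter>k\<le>n. {g \<in> paths X. g ` {real k / n} \<subseteq> C k}) \<inter> paths X))"
    unfolding topspace_CO_topology by (rule openin_Int)
  moreover have "((\<Inter>k<n. {g \<in> paths X. g ` {real k / n..real (Suc k) / n} \<subseteq> W k}) \<inter> paths X) \<inter>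
     ((\<Inter>k\<le>n. {g \<in> paths X. g ` {real k / n} \<subseteq> C k}) \<inter> paths X) = {g. follows_chain X n W C g}"
    by (auto simp: follows_chain_def paths_def)
  ultimately show ?thesis
    by simp
qed

lemma unit_interval_uniform_subdivision:
  assumes cover: "{0..1} \<subseteq> \<Union>\<C>" and "\<And>B. B \<in> \<C> \<Longrightarrow> open B"
  obtains n :: nat where "0 < n" "\<And>k. k < n \<Longrightarrow> \<exists>B\<in>\<C>. {real k / n..real (Suc k) / n} \<subseteq> B"
proof -
  have "\<C> \<noteq> {}"
    using cover by auto
  then obtain d where d: "0 < d"
    and leb: "\<And>T. T \<subseteq> {0..1} \<Longrightarrow> diameter T < d \<Longrightarrow> \<exists>B\<in>\<C>. T \<subseteq> B"
    using Lebesgue_number_lemma[OF compact_Icc _ cover] assms(2) by blast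
  obtain n0 :: nat where n0: "inverse (real (Suc n0)) < d"
    using reals_Archimedean[OF d] by blast
  have "\<exists>B\<in>\<C>. {real k / Suc n0..real (Suc k) / Suc n0} \<subseteq> B" if "k < Suc n0" for k
  proof (rule leb)
    show "{real k / Suc n0..real (Suc k) / Suc n0} \<subseteq> {0..1}"
      using that by (auto simp: divide_le_eq_1)
    show "diameter {real k / Suc n0..real (Suc k) / Suc n0} < d"
      using n0 d by (simp add: divide_right_mono diff_divide_distrib[symmetric] inverse_eq_divide)
  qed
  then show ?thesis
    using that[of "Suc n0"] by blast
qed

lemma path_subdivision_subordinate:
  assumes f: "pathin X f" and cover: "\<And>t. t \<in> {0..1} \<Longrightarrow> \<exists>W\<in>\<U>. f t \<in> W"
    and open_\<U>: "\<And>W. W \<in> \<U> \<Longrightarrow> openin X W"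
  obtains n :: nat and W where "0 < n"
    "\<And>k. k < n \<Longrightarrow> W k \<in> \<U> \<and> f ` {real k / n..real (Suc k) / n} \<subseteq> W k"
proof -
  define \<C> where "\<C> = {T. open T \<and> (\<exists>W\<in>\<U>. f ` ({0..1} \<inter> T) \<subseteq> W)}"
  have "{0..1} \<subseteq> \<Union>\<C>"
  proof
    fix t :: real
    assume t: "t \<in> {0..1}"
    then obtain W where W: "W \<in> \<U>" "f t \<in> W"
      using cover by blast
    have "openin (top_of_set {0..1}) {s \<in> topspace (top_of_set {0..1}). f s \<in> W}"
      using f open_\<U>[OF W(1)] unfolding pathin_def by (rule openin_continuous_map_preimage)
    then obtain T where T: "open T" "{s \<in> {0..1}. f s \<in> W} = {0..1} \<inter> T"
      by (auto simp: openin_open)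
    then have "T \<in> \<C>"
      using W(1) unfolding \<C>_def by blast
    moreover have "t \<in> T"
      using T(2) t W(2) by blast
    ultimately show "t \<in> \<Union>\<C>"
      by blast
  qed
  then obtain n :: nat where n: "0 < n"
    and sub: "\<And>k. k < n \<Longrightarrow> \<exists>B\<in>\<C>. {real k / n..real (Suc k) / n} \<subseteq> B"
    by (rule unit_interval_uniform_subdivision) (auto simp: \<C>_def)
  have "\<exists>W. k < n \<longrightarrow> W \<in> \<U> \<and> f ` {real k / n..real (Suc k) / n} \<subseteq> W" for k
  proof (cases "k < n")
    case True
    then obtain B W where "W \<in> \<U>" "f ` ({0..1} \<inter> B) \<subseteq> W" "{real k / n..real (Suc k) / n} \<subseteq> B"
      using sub unfolding \<C>_def by blast
    moreover have "{real k / n..real (Suc k) / n} \<subseteq> {0..1}"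
      using True by (auto simp: divide_le_eq_1)
    ultimately show ?thesis
      by (intro exI[of _ W]) blast
  qed simp
  then have "\<exists>W. \<forall>k. k < n \<longrightarrow> W k \<in> \<U> \<and> f ` {real k / n..real (Suc k) / n} \<subseteq> W k"
    by (rule choice[OF allI])
  then obtain W where W: "\<forall>k. k < n \<longrightarrow> W k \<in> \<U> \<and> f ` {real k / n..real (Suc k) / n} \<subseteq> W k"
    ..
  show ?thesis
    by (rule that[OF n]) (use W in blast)
qed

lemma locally_path_connected_nbhds:
  assumes "locally_path_connected_space X" and "\<And>k. P k \<Longrightarrow> openin X (E k) \<and> x k \<in> E k"
  obtains C where "\<And>k. P k \<Longrightarrow> openin X (C k) \<and> path_connectedin X (C k) \<and> x k \<in> C k \<and> C k \<subseteq> E k"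
proof -
  have "\<exists>C. P k \<longrightarrow> openin X C \<and> path_connectedin X C \<and> x k \<in> C \<and> C \<subseteq> E k" for k
    using assms unfolding locally_path_connected_space by blast
  then have "\<exists>C. \<forall>k. P k \<longrightarrow> openin X (C k) \<and> path_connectedin X (C k) \<and> x k \<in> C k \<and> C k \<subseteq> E k"
    by (rule choice[OF allI])
  then show ?thesis
    using that by blast
qed

lemma inessential_chain_along_path:
  assumes lpc: "locally_path_connected_space X" and slsc: "semilocally_simply_connected X"
    and f: "pathin X f" and U: "openin X U" "f 1 \<in> U" and V: "openin X V" "f 0 \<in> V"
  obtains n W C where "inessential_chain X n W C" "follows_chain X n W C f"
    "\<And>k. k < n \<Longrightarrow> openin X (W k)" "\<And>k. k \<le> n \<Longrightarrow> openin X (C k)" "C 0 \<subseteq> V" "C n \<subseteq> U"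
proof -
  have "\<exists>W\<in>{W. openin X W \<and> rel_inessential X W}. f t \<in> W" if "t \<in> {0..1}" for t
  proof -
    have "f t \<in> topspace X"
      using path_image_subset_topspace[OF f] that by blast
    then obtain W where "openin X W" "rel_inessential X W" "f t \<in> W"
      by (rule semilocally_simply_connected_nbhd[OF slsc])
    then show ?thesis
      by blast
  qed
  then obtain n :: nat and W where n: "0 < n" and W: "\<And>k. k < n \<Longrightarrow> openin X (W k) \<and>
      rel_inessential X (W k) \<and> f ` {real k / n..real (Suc k) / n} \<subseteq> W k"
    by (rule path_subdivision_subordinate[OF f]) auto
  define E where "E k = (if k = 0 then W 0 \<inter> V else if k = n then W (n - 1) \<inter> U
                         else W (k - 1) \<inter> W k)" for k
  have fW: "f (real k / n) \<in> W k" if "k < n" for k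
    using W[OF that] by (simp add: image_subset_iff divide_right_mono)
  have fW': "f (real k / n) \<in> W (k - 1)" if "0 < k" "k \<le> n" for k
  proof -
    have "real (Suc (k - 1)) = real k"
      using that by simp
    then show ?thesis
      using W[of "k - 1"] that by (simp add: image_subset_iff divide_right_mono)
  qed
  have "openin X (E k) \<and> f (real k / n) \<in> E k" if "k \<le> n" for k
    using W[of k] W[of "k - 1"] W[of 0] fW[of k] fW'[of k] fW[of 0] fW'[of n] n U V that
    by (auto simp: E_def)
  then obtain C where C: "\<And>k. k \<le> n \<Longrightarrow> openin X (C k) \<and> path_connectedin X (C k) \<and>
                                          f (real k / n) \<in> C k \<and> C k \<subseteq> E k"
    using locally_path_connected_nbhds[OF lpc, where P = "\<lambda>k. k \<le> n" and x = "\<lambda>k. f (real k / n)"]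
    by blast
  show ?thesis
  proof (rule that)
    have "C k \<subseteq> W k \<and> C (Suc k) \<subseteq> W k" if "k < n" for k
      using C[of k] C[of "Suc k"] that by (auto simp: E_def split: if_splits)
    then show "inessential_chain X n W C"
      using n W C by (simp add: inessential_chain_def)
    show "follows_chain X n W C f"
      using f W C by (simp add: follows_chain_def)
    show "C 0 \<subseteq> V" "C n \<subseteq> U"
      using C[of 0] C[of n] n by (auto simp: E_def)
  qed (use W C in auto)
qed

lemma CO_nbhd_homotopic_to_pcomp:
  assumes lpc: "locally_path_connected_space X" and slsc: "semilocally_simply_connected X"
    and f: "pathin X f" and U: "openin X U" "f 1 \<in> U" and V: "openin X V" "f 0 \<in> V"
  obtains T where "openin (CO_topology X) T" "f \<in> T"
    "\<And>g. g \<in> T \<Longrightarrow> \<exists>\<alpha> \<beta>. pathin (subtopology X U) \<alpha> \<and> \<alpha> 0 = f 1 \<and> \<alpha> 1 = g 1 \<and>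
                         pathin (subtopology X V) \<beta> \<and> \<beta> 0 = g 0 \<and> \<beta> 1 = f 0 \<and>
                         path_homotopic X g (pcomp \<alpha> (pcomp f \<beta>))"
proof -
  obtain n W C where chain: "inessential_chain X n W C" and f_chain: "follows_chain X n W C f"
    and opens: "\<And>k. k < n \<Longrightarrow> openin X (W k)" "\<And>k. k \<le> n \<Longrightarrow> openin X (C k)"
    and ends: "C 0 \<subseteq> V" "C n \<subseteq> U"
    using inessential_chain_along_path[OF lpc slsc f U V] by blast
  have "\<exists>\<alpha> \<beta>. pathin (subtopology X U) \<alpha> \<and> \<alpha> 0 = f 1 \<and> \<alpha> 1 = g 1 \<and>
               pathin (subtopology X V) \<beta> \<and> \<beta> 0 = g 0 \<and> \<beta> 1 = f 0 \<and>
               path_homotopic X g (pcomp \<alpha> (pcomp f \<beta>))" if g: "follows_chain X n W C g" for g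
  proof -
    obtain \<alpha> \<beta> where "pathin (subtopology X (C n)) \<alpha>" "\<alpha> 0 = f 1" "\<alpha> 1 = g 1"
      "pathin (subtopology X (C 0)) \<beta>" "\<beta> 0 = g 0" "\<beta> 1 = f 0"
      "path_homotopic X g (pcomp \<alpha> (pcomp f \<beta>))"
      using homotopic_along_chain[OF chain f_chain g] by blast
    with ends show ?thesis
      by (meson pathin_subtopology subsetD)
  qed
  moreover have "openin (CO_topology X) {g. follows_chain X n W C g}"
    by (rule openin_CO_topology_follows_chain) (use opens in auto)
  ultimately show ?thesis
    using that f_chain by blast
qed

lemma pclass_pcomp_in_Nset:
  assumes \<gamma>: "pathin X \<gamma>" and f: "pathin X f" "pclass X f \<in> Nset X \<gamma> U V"
    and \<alpha>: "pathin (subtopology X U) \<alpha>" "\<alpha> 0 = f 1"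
    and \<beta>: "pathin (subtopology X V) \<beta>" "\<beta> 1 = f 0"
  shows "pclass X (pcomp \<alpha> (pcomp f \<beta>)) \<in> Nset X \<gamma> U V"
proof -
  obtain \<delta> \<theta> where cl: "pclass X f = pclass X (pcomp \<delta> (pcomp \<gamma> \<theta>))"
    and \<delta>: "pathin (subtopology X U) \<delta>" "\<delta> 0 = \<gamma> 1"
    and \<theta>: "pathin (subtopology X V) \<theta>" "\<theta> 1 = \<gamma> 0"
    using f(2) unfolding Nset_def by blast
  have hf: "path_homotopic X (pcomp \<delta> (pcomp \<gamma> \<theta>)) f"
    using pclass_eq_imp_path_homotopic[OF cl[symmetric] f(1)] .
  have ends: "f 0 = \<theta> 0" "f 1 = \<delta> 1"
    using path_homotopic_endpoints[OF hf] by simp_all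
  have paths: "pathin X \<alpha>" "pathin X \<beta>" "pathin X \<delta>" "pathin X \<theta>"
    using \<alpha>(1) \<beta>(1) \<delta>(1) \<theta>(1) by (auto simp: pathin_subtopology)
  note ends' = \<alpha>(2) \<beta>(2) \<delta>(2) \<theta>(2) ends
  have "path_homotopic X (pcomp \<alpha> (pcomp f \<beta>)) (pcomp \<alpha> (pcomp (pcomp \<delta> (pcomp \<gamma> \<theta>)) \<beta>))"
    using ends' by (intro path_homotopic_pcomp path_homotopic_refl path_homotopic_sym[OF hf] paths)
                   simp_all
  also have "path_homotopic X \<dots> (pcomp \<alpha> (pcomp \<delta> (pcomp (pcomp \<gamma> \<theta>) \<beta>)))"
    using ends' by (intro path_homotopic_pcomp path_homotopic_refl pathin_pcomp paths \<gamma>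
                      path_homotopic_sym[OF path_homotopic_pcomp_assoc]) simp_all
  also have "path_homotopic X \<dots> (pcomp \<alpha> (pcomp \<delta> (pcomp \<gamma> (pcomp \<theta> \<beta>))))"
    using ends' by (intro path_homotopic_pcomp path_homotopic_refl pathin_pcomp paths \<gamma>
                      path_homotopic_sym[OF path_homotopic_pcomp_assoc]) simp_all
  also have "path_homotopic X \<dots> (pcomp (pcomp \<alpha> \<delta>) (pcomp \<gamma> (pcomp \<theta> \<beta>)))"
    using ends' by (intro path_homotopic_pcomp_assoc pathin_pcomp paths \<gamma>) simp_all
  finally have "pclass X (pcomp \<alpha> (pcomp f \<beta>)) = pclass X (pcomp (pcomp \<alpha> \<delta>) (pcomp \<gamma> (pcomp \<theta> \<beta>)))"
    by (rule path_homotopic_imp_pclass_eq)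
  moreover have "pathin (subtopology X U) (pcomp \<alpha> \<delta>)" "pathin (subtopology X V) (pcomp \<theta> \<beta>)"
    using \<alpha> \<beta> \<delta> \<theta> ends by (auto intro: pathin_pcomp)
  ultimately show ?thesis
    unfolding Nset_def using \<delta>(2) \<theta>(2)
    by (intro CollectI exI[of _ "pcomp \<alpha> \<delta>"] exI[of _ "pcomp \<theta> \<beta>"]) simp
qed

lemma openin_COq_topology_Nset:
  assumes lpc: "locally_path_connected_space X" and slsc: "semilocally_simply_connected X"
    and \<gamma>: "pathin X \<gamma>" and U: "openin X U" and V: "openin X V"
  shows "openin (COq_topology X) (Nset X \<gamma> U V)"
  unfolding openin_COq_topology
proof (intro conjI Nset_subset_Pi1[OF \<gamma>])
  show "openin (CO_topology X) {f \<in> paths X. pclass X f \<in> Nset X \<gamma> U V}"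
  proof (subst openin_subopen, intro ballI)
    fix f
    assume "f \<in> {f \<in> paths X. pclass X f \<in> Nset X \<gamma> U V}"
    then have f: "pathin X f" "pclass X f \<in> Nset X \<gamma> U V"
      by (auto simp: paths_def)
    then obtain \<delta> \<theta> where cl: "pclass X f = pclass X (pcomp \<delta> (pcomp \<gamma> \<theta>))"
      and \<delta>: "pathin (subtopology X U) \<delta>" and \<theta>: "pathin (subtopology X V) \<theta>"
      unfolding Nset_def by blast
    have "f 1 = \<delta> 1" "f 0 = \<theta> 0"
      using path_homotopic_endpoints[OF pclass_eq_imp_path_homotopic[OF cl[symmetric] f(1)]] by simp_all
    then have "f 1 \<in> U" "f 0 \<in> V"
      using \<delta> \<theta> by (auto simp: pathin_subtopology)
    then obtain T where T: "openin (CO_topology X) T" "f \<in> T"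
      and near: "\<And>g. g \<in> T \<Longrightarrow> \<exists>\<alpha> \<beta>. pathin (subtopology X U) \<alpha> \<and> \<alpha> 0 = f 1 \<and> \<alpha> 1 = g 1 \<and>
                   pathin (subtopology X V) \<beta> \<and> \<beta> 0 = g 0 \<and> \<beta> 1 = f 0 \<and>
                   path_homotopic X g (pcomp \<alpha> (pcomp f \<beta>))"
      using CO_nbhd_homotopic_to_pcomp[OF lpc slsc f(1) U _ V] by blast
    have "pclass X g \<in> Nset X \<gamma> U V" if "g \<in> T" for g
      using near[OF that] pclass_pcomp_in_Nset[OF \<gamma> f] path_homotopic_imp_pclass_eq by metis
    moreover have "T \<subseteq> paths X"
      using openin_subset[OF T(1)] by (simp add: topspace_CO_topology)
    ultimately show "\<exists>T. openin (CO_topology X) T \<and> f \<in> T \<and>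
                       T \<subseteq> {f \<in> paths X. pclass X f \<in> Nset X \<gamma> U V}"
      using T by blast
  qed
qed

lemma openin_UC_imp_openin_COq:
  assumes lpc: "locally_path_connected_space X" and slsc: "semilocally_simply_connected X"
    and S: "openin (UC_topology X) S"
  shows "openin (COq_topology X) S"
proof -
  have "generate_topology_on (insert (Pi1 X)
          {Nset X \<gamma> U V | \<gamma> U V. pathin X \<gamma> \<and>
             openin X U \<and> \<gamma> 1 \<in> U \<and> path_connectedin X U \<and> rel_inessential X U \<and>
             openin X V \<and> \<gamma> 0 \<in> V \<and> path_connectedin X V \<and> rel_inessential X V}) S"
    using S by (simp add: UC_topology_def openin_topology_generated_by_iff)
  then show ?thesis
  proof (rule generate_topology_on_coarsest[OF istopology_openin, rotated])
    have "{f \<in> paths X. pclass X f \<in> Pi1 X} = topspace (CO_topology X)"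
      by (auto simp: topspace_CO_topology Pi1_def)
    then have "openin (COq_topology X) (Pi1 X)"
      by (simp add: openin_COq_topology)
    then show "openin (COq_topology X) N"
      if "N \<in> insert (Pi1 X) {Nset X \<gamma> U V | \<gamma> U V. pathin X \<gamma> \<and>
             openin X U \<and> \<gamma> 1 \<in> U \<and> path_connectedin X U \<and> rel_inessential X U \<and>
             openin X V \<and> \<gamma> 0 \<in> V \<and> path_connectedin X V \<and> rel_inessential X V}" for N
      using that openin_COq_topology_Nset[OF lpc slsc] by blast
  qed
qed

theorem proposition2p4:
  fixes X :: "'a topology"
  assumes "locally_path_connected_space X"
    and "semilocally_simply_connected X"
  shows "COq_topology X = UC_topology X"
  using openin_UC_imp_openin_COq[OF assms] openin_COq_imp_openin_UC[OF assms]
  by (auto simp: topology_eq)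

end
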